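(* Let $R$ be a commutative refinement ring. Then every stably free $R$-module is free.
   Context: A ring $R$ is a refinement ring if the monoid $V(R)$ of isomorphism classes of finitely generated projective $R$-modules (under direct sum) has the refinement property: whenever $x_1+x_2=y_1+y_2$ in $V(R)$, there exist $z_{ij}\in V(R)$ with $x_i=z_{i1}+z_{i2}$ and $y_j=z_{1j}+z_{2j}$. *)

theory Defs
  imports "HOL-Algebra.Module"
begin

definition mod_iso :: "('a,'e) ring_scheme \<Rightarrow> ('a,'b) module \<Rightarrow> ('a,'c) module \<Rightarrow> bool" where
  "mod_iso R M N \<longleftrightarrow> (\<exists>f. bij_betw f (carrier M) (carrier N) \<and>
     (\<forall>x\<in>carrier M. \<forall>y\<in>carrier M. f (x \<oplus>\<^bsub>M\<^esub> y) = f x \<oplus>\<^bsub>N\<^esub> f y) \<and>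
     (\<forall>a\<in>carrier R. \<forall>x\<in>carrier M. f (a \<odot>\<^bsub>M\<^esub> x) = a \<odot>\<^bsub>N\<^esub> f x))"

definition free_mod :: "('a,'e) ring_scheme \<Rightarrow> nat \<Rightarrow> ('a, nat \<Rightarrow> 'a) module" where
  "free_mod R n = \<lparr> carrier = {v. (\<forall>i<n. v i \<in> carrier R) \<and> (\<forall>i\<ge>n. v i = \<zero>\<^bsub>R\<^esub>)},
     monoid.mult = undefined, one = undefined,
     zero = (\<lambda>i. \<zero>\<^bsub>R\<^esub>),
     add = (\<lambda>v w i. v i \<oplus>\<^bsub>R\<^esub> w i),
     smult = (\<lambda>a v i. a \<otimes>\<^bsub>R\<^esub> v i) \<rparr>"

definition dsum :: "('a,'b) module \<Rightarrow> ('a,'c) module \<Rightarrow> ('a, 'b \<times> 'c) module" where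
  "dsum M N = \<lparr> carrier = carrier M \<times> carrier N,
     monoid.mult = undefined, one = undefined,
     zero = (\<zero>\<^bsub>M\<^esub>, \<zero>\<^bsub>N\<^esub>),
     add = (\<lambda>x y. (fst x \<oplus>\<^bsub>M\<^esub> fst y, snd x \<oplus>\<^bsub>N\<^esub> snd y)),
     smult = (\<lambda>a x. (a \<odot>\<^bsub>M\<^esub> fst x, a \<odot>\<^bsub>N\<^esub> snd x)) \<rparr>"

definition fg_proj :: "('a,'e) ring_scheme \<Rightarrow> ('a,'b) module \<Rightarrow> bool" where
  "fg_proj R M \<longleftrightarrow> module R M \<and>
     (\<exists>n (N :: ('a, nat \<Rightarrow> 'a) module). module R N \<and> mod_iso R (dsum M N) (free_mod R n))"

text \<open>Refinement ring: V(R) has the refinement property. Every f.g. projective module is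
  isomorphic to one with carrier in type nat => 'a (a summand of R^n), so V(R) is represented
  by f.g. projective modules of that type, up to isomorphism.\<close>
definition refinement_ring :: "('a,'e) ring_scheme \<Rightarrow> bool" where
  "refinement_ring R \<longleftrightarrow>
    (\<forall>(X1 :: ('a, nat \<Rightarrow> 'a) module) (X2 :: ('a, nat \<Rightarrow> 'a) module)
        (Y1 :: ('a, nat \<Rightarrow> 'a) module) (Y2 :: ('a, nat \<Rightarrow> 'a) module).
       fg_proj R X1 \<and> fg_proj R X2 \<and> fg_proj R Y1 \<and> fg_proj R Y2 \<and>
       mod_iso R (dsum X1 X2) (dsum Y1 Y2) \<longrightarrow>
       (\<exists>(Z11 :: ('a, nat \<Rightarrow> 'a) module) (Z12 :: ('a, nat \<Rightarrow> 'a) module)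
          (Z21 :: ('a, nat \<Rightarrow> 'a) module) (Z22 :: ('a, nat \<Rightarrow> 'a) module).
          fg_proj R Z11 \<and> fg_proj R Z12 \<and> fg_proj R Z21 \<and> fg_proj R Z22 \<and>
          mod_iso R X1 (dsum Z11 Z12) \<and> mod_iso R X2 (dsum Z21 Z22) \<and>
          mod_iso R Y1 (dsum Z11 Z21) \<and> mod_iso R Y2 (dsum Z12 Z22)))"

definition stably_free :: "('a,'e) ring_scheme \<Rightarrow> ('a,'b) module \<Rightarrow> bool" where
  "stably_free R P \<longleftrightarrow> module R P \<and>
     (\<exists>m n. mod_iso R (dsum P (free_mod R m)) (free_mod R n))"

definition free_module :: "('a,'e) ring_scheme \<Rightarrow> ('a,'b) module \<Rightarrow> bool" where
  "free_module R P \<longleftrightarrow> module R P \<and> (\<exists>k. mod_iso R P (free_mod R k))"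

end

theory Submission
  imports Defs
begin

text \<open>Write \<open>P \<oplus> R\<^sup>m \<cong> R\<^sup>n\<close> and peel off one copy of \<open>R\<close> at a time: it suffices that
  \<open>M \<oplus> R \<cong> R\<^sup>k \<oplus> R\<close> implies \<open>M \<cong> R\<^sup>k\<close>. Refining this decomposition gives \<open>M \<cong> Z\<^sub>1\<^sub>1 \<oplus> Z\<^sub>1\<^sub>2\<close>,
  \<open>R\<^sup>k \<cong> Z\<^sub>1\<^sub>1 \<oplus> Z\<^sub>2\<^sub>1\<close> and \<open>Z\<^sub>2\<^sub>1 \<oplus> Z\<^sub>2\<^sub>2 \<cong> R \<cong> Z\<^sub>1\<^sub>2 \<oplus> Z\<^sub>2\<^sub>2\<close>. Over a commutative ring a direct
  summand of \<open>R\<close> is determined by its complement \<open>D\<close>, being isomorphic to the annihilator of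
  \<open>D\<close>; hence \<open>Z\<^sub>1\<^sub>2 \<cong> Z\<^sub>2\<^sub>1\<close> and \<open>M \<cong> Z\<^sub>1\<^sub>1 \<oplus> Z\<^sub>2\<^sub>1 \<cong> R\<^sup>k\<close>.\<close>

lemma dsum_simps [simp]:
  "carrier (dsum M N) = carrier M \<times> carrier N"
  "\<zero>\<^bsub>dsum M N\<^esub> = (\<zero>\<^bsub>M\<^esub>, \<zero>\<^bsub>N\<^esub>)"
  "x \<oplus>\<^bsub>dsum M N\<^esub> y = (fst x \<oplus>\<^bsub>M\<^esub> fst y, snd x \<oplus>\<^bsub>N\<^esub> snd y)"
  "a \<odot>\<^bsub>dsum M N\<^esub> x = (a \<odot>\<^bsub>M\<^esub> fst x, a \<odot>\<^bsub>N\<^esub> snd x)"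
  by (simp_all add: dsum_def)

lemma free_mod_simps [simp]:
  "v \<in> carrier (free_mod R n) \<longleftrightarrow> (\<forall>i<n. v i \<in> carrier R) \<and> (\<forall>i\<ge>n. v i = \<zero>\<^bsub>R\<^esub>)"
  "\<zero>\<^bsub>free_mod R n\<^esub> = (\<lambda>i. \<zero>\<^bsub>R\<^esub>)"
  "v \<oplus>\<^bsub>free_mod R n\<^esub> w = (\<lambda>i. v i \<oplus>\<^bsub>R\<^esub> w i)"
  "a \<odot>\<^bsub>free_mod R n\<^esub> v = (\<lambda>i. a \<otimes>\<^bsub>R\<^esub> v i)"
  by (simp_all add: free_mod_def)

lemma free_mod_carrier_closed:
  assumes "ring R" and "v \<in> carrier (free_mod R n)"
  shows "v i \<in> carrier R"
  using assms by (cases "i < n") (auto simp: ring.ring_simprules(2))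

lemma free_mod_module:
  assumes "cring R"
  shows "module R (free_mod R n)"
proof -
  interpret cring R by fact
  have closed: "v i \<in> carrier R" if "v \<in> carrier (free_mod R n)" for v i
    using free_mod_carrier_closed[OF ring_axioms that] .
  show ?thesis
  proof (rule moduleI[OF assms], rule abelian_groupI)
    fix v assume v: "v \<in> carrier (free_mod R n)"
    show "\<exists>w\<in>carrier (free_mod R n). w \<oplus>\<^bsub>free_mod R n\<^esub> v = \<zero>\<^bsub>free_mod R n\<^esub>"
      using v by (intro bexI[of _ "\<lambda>i. \<ominus>\<^bsub>R\<^esub> v i"]) (auto simp: fun_eq_iff closed l_neg)
  qed (auto simp: a_ac l_distr r_distr m_assoc fun_eq_iff closed)
qed

lemma dsum_module:
  assumes "module R M" and "module R N"
  shows "module R (dsum M N)"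
proof -
  interpret M: module R M by fact
  interpret N: module R N by fact
  show ?thesis
  proof (rule moduleI[OF M.is_cring], rule abelian_groupI)
    fix x assume x: "x \<in> carrier (dsum M N)"
    show "\<exists>y\<in>carrier (dsum M N). y \<oplus>\<^bsub>dsum M N\<^esub> x = \<zero>\<^bsub>dsum M N\<^esub>"
      using x by (intro bexI[of _ "(\<ominus>\<^bsub>M\<^esub> fst x, \<ominus>\<^bsub>N\<^esub> snd x)"])
        (auto simp: M.M.l_neg N.M.l_neg)
  qed (auto simp: M.a_ac N.a_ac M.smult_l_distr N.smult_l_distr M.smult_r_distr
         N.smult_r_distr M.smult_assoc1 N.smult_assoc1)
qed

lemma mod_isoI:
  assumes "bij_betw f (carrier M) (carrier N)"
    and "\<And>x y. x \<in> carrier M \<Longrightarrow> y \<in> carrier M \<Longrightarrow> f (x \<oplus>\<^bsub>M\<^esub> y) = f x \<oplus>\<^bsub>N\<^esub> f y"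
    and "\<And>a x. a \<in> carrier R \<Longrightarrow> x \<in> carrier M \<Longrightarrow> f (a \<odot>\<^bsub>M\<^esub> x) = a \<odot>\<^bsub>N\<^esub> f x"
  shows "mod_iso R M N"
  using assms unfolding mod_iso_def by blast

lemma mod_isoE:
  assumes "mod_iso R M N"
  obtains f where "bij_betw f (carrier M) (carrier N)"
    and "\<And>x y. x \<in> carrier M \<Longrightarrow> y \<in> carrier M \<Longrightarrow> f (x \<oplus>\<^bsub>M\<^esub> y) = f x \<oplus>\<^bsub>N\<^esub> f y"
    and "\<And>a x. a \<in> carrier R \<Longrightarrow> x \<in> carrier M \<Longrightarrow> f (a \<odot>\<^bsub>M\<^esub> x) = a \<odot>\<^bsub>N\<^esub> f x"
  using assms unfolding mod_iso_def by blast

lemma mod_iso_refl: "mod_iso R M M"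
  by (rule mod_isoI[of id]) auto

lemma mod_iso_trans:
  assumes "mod_iso R M N" and "mod_iso R N K"
  shows "mod_iso R M K"
proof -
  obtain f where f: "bij_betw f (carrier M) (carrier N)"
    and f_add: "\<And>x y. x \<in> carrier M \<Longrightarrow> y \<in> carrier M \<Longrightarrow> f (x \<oplus>\<^bsub>M\<^esub> y) = f x \<oplus>\<^bsub>N\<^esub> f y"
    and f_smult: "\<And>a x. a \<in> carrier R \<Longrightarrow> x \<in> carrier M \<Longrightarrow> f (a \<odot>\<^bsub>M\<^esub> x) = a \<odot>\<^bsub>N\<^esub> f x"
    using assms(1) by (elim mod_isoE) blast
  obtain g where g: "bij_betw g (carrier N) (carrier K)"
    and g_add: "\<And>x y. x \<in> carrier N \<Longrightarrow> y \<in> carrier N \<Longrightarrow> g (x \<oplus>\<^bsub>N\<^esub> y) = g x \<oplus>\<^bsub>K\<^esub> g y"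
    and g_smult: "\<And>a x. a \<in> carrier R \<Longrightarrow> x \<in> carrier N \<Longrightarrow> g (a \<odot>\<^bsub>N\<^esub> x) = a \<odot>\<^bsub>K\<^esub> g x"
    using assms(2) by (elim mod_isoE) blast
  have f_closed: "f x \<in> carrier N" if "x \<in> carrier M" for x
    using f that by (rule bij_betw_apply)
  show ?thesis
    by (rule mod_isoI[of "g \<circ> f"]) (auto intro: bij_betw_trans f g simp: f_add g_add f_smult g_smult f_closed)
qed

lemma mod_iso_sym:
  assumes "mod_iso R M N" and "module R M"
  shows "mod_iso R N M"
proof -
  interpret module R M by fact
  obtain f where f: "bij_betw f (carrier M) (carrier N)"
    and f_add: "\<And>x y. x \<in> carrier M \<Longrightarrow> y \<in> carrier M \<Longrightarrow> f (x \<oplus>\<^bsub>M\<^esub> y) = f x \<oplus>\<^bsub>N\<^esub> f y"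
    and f_smult: "\<And>a x. a \<in> carrier R \<Longrightarrow> x \<in> carrier M \<Longrightarrow> f (a \<odot>\<^bsub>M\<^esub> x) = a \<odot>\<^bsub>N\<^esub> f x"
    using assms(1) by (elim mod_isoE) blast
  define g where "g = inv_into (carrier M) f"
  have g: "bij_betw g (carrier N) (carrier M)"
    unfolding g_def using f by (rule bij_betw_inv_into)
  have g_closed: "g y \<in> carrier M" if "y \<in> carrier N" for y
    using g that by (rule bij_betw_apply)
  have f_g: "f (g y) = y" if "y \<in> carrier N" for y
    unfolding g_def using f that by (rule bij_betw_inv_into_right)
  have g_f: "g (f x) = x" if "x \<in> carrier M" for x
    unfolding g_def using f that by (rule bij_betw_inv_into_left)
  show ?thesis
  proof (rule mod_isoI[OF g])
    fix x y assume "x \<in> carrier N" "y \<in> carrier N"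
    then show "g (x \<oplus>\<^bsub>N\<^esub> y) = g x \<oplus>\<^bsub>M\<^esub> g y"
      using g_f[of "g x \<oplus>\<^bsub>M\<^esub> g y"] by (simp add: f_add f_g g_closed)
  next
    fix a x assume "a \<in> carrier R" "x \<in> carrier N"
    then show "g (a \<odot>\<^bsub>N\<^esub> x) = a \<odot>\<^bsub>M\<^esub> g x"
      using g_f[of "a \<odot>\<^bsub>M\<^esub> g x"] by (simp add: f_smult f_g g_closed)
  qed
qed

lemma mod_iso_dsum:
  assumes "mod_iso R M M'" and "mod_iso R N N'"
  shows "mod_iso R (dsum M N) (dsum M' N')"
proof -
  obtain f where f: "bij_betw f (carrier M) (carrier M')"
    and f_add: "\<And>x y. x \<in> carrier M \<Longrightarrow> y \<in> carrier M \<Longrightarrow> f (x \<oplus>\<^bsub>M\<^esub> y) = f x \<oplus>\<^bsub>M'\<^esub> f y"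
    and f_smult: "\<And>a x. a \<in> carrier R \<Longrightarrow> x \<in> carrier M \<Longrightarrow> f (a \<odot>\<^bsub>M\<^esub> x) = a \<odot>\<^bsub>M'\<^esub> f x"
    using assms(1) by (elim mod_isoE) blast
  obtain g where g: "bij_betw g (carrier N) (carrier N')"
    and g_add: "\<And>x y. x \<in> carrier N \<Longrightarrow> y \<in> carrier N \<Longrightarrow> g (x \<oplus>\<^bsub>N\<^esub> y) = g x \<oplus>\<^bsub>N'\<^esub> g y"
    and g_smult: "\<And>a x. a \<in> carrier R \<Longrightarrow> x \<in> carrier N \<Longrightarrow> g (a \<odot>\<^bsub>N\<^esub> x) = a \<odot>\<^bsub>N'\<^esub> g x"
    using assms(2) by (elim mod_isoE) blast
  show ?thesis
    by (rule mod_isoI[of "map_prod f g"])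
       (auto intro: bij_betw_map_prod f g simp: f_add g_add f_smult g_smult)
qed

lemma mod_iso_dsum_assoc: "mod_iso R (dsum (dsum M N) K) (dsum M (dsum N K))"
  by (rule mod_isoI[of "\<lambda>((x, y), z). (x, (y, z))"])
     (auto intro!: bij_betw_byWitness[where f'="\<lambda>(x, (y, z)). ((x, y), z)"] simp: split_beta)

lemma mod_iso_dsum_free_zero: "mod_iso R (dsum M (free_mod R 0)) M"
  by (rule mod_isoI[of fst]) (auto intro!: bij_betw_byWitness[where f'="\<lambda>x. (x, \<lambda>i. \<zero>\<^bsub>R\<^esub>)"])

lemma mod_iso_free_Suc:
  assumes "ring R"
  shows "mod_iso R (free_mod R (Suc n)) (dsum (free_mod R n) (free_mod R 1))"
proof -
  interpret ring R by fact
  define detach where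
    "detach = (\<lambda>v. (\<lambda>i. if i < n then v i else \<zero>\<^bsub>R\<^esub>, \<lambda>i::nat. if i = 0 then v n else \<zero>\<^bsub>R\<^esub>))"
  define attach where
    "attach = (\<lambda>(u, w :: nat \<Rightarrow> 'a) i. if i < n then u i else if i = n then w 0 else \<zero>\<^bsub>R\<^esub>)"
  have "bij_betw detach (carrier (free_mod R (Suc n))) (carrier (dsum (free_mod R n) (free_mod R 1)))"
    by (rule bij_betw_byWitness[where f'=attach]) (auto simp: detach_def attach_def fun_eq_iff)
  then show ?thesis
    by (rule mod_isoI) (auto simp: detach_def fun_eq_iff)
qed

lemma free_mod_fg_proj:
  assumes "cring R"
  shows "fg_proj R (free_mod R n)"
  unfolding fg_proj_def using free_mod_module[OF assms] mod_iso_dsum_free_zero by blast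

lemma submodule_image:
  assumes "module R M" and "module R K"
    and f_closed: "f ` carrier M \<subseteq> carrier K"
    and f_add: "\<And>x y. x \<in> carrier M \<Longrightarrow> y \<in> carrier M \<Longrightarrow> f (x \<oplus>\<^bsub>M\<^esub> y) = f x \<oplus>\<^bsub>K\<^esub> f y"
    and f_smult: "\<And>a x. a \<in> carrier R \<Longrightarrow> x \<in> carrier M \<Longrightarrow> f (a \<odot>\<^bsub>M\<^esub> x) = a \<odot>\<^bsub>K\<^esub> f x"
  shows "submodule (f ` carrier M) R K"
proof -
  interpret M: module R M by fact
  interpret K: module R K by fact
  show ?thesis
  proof (rule K.submoduleI)
    have "f \<zero>\<^bsub>M\<^esub> \<in> carrier K"
      using f_closed by blast
    then have "f \<zero>\<^bsub>M\<^esub> = \<zero>\<^bsub>K\<^esub>"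
      using f_smult[of "\<zero>\<^bsub>R\<^esub>" "\<zero>\<^bsub>M\<^esub>"] by simp
    then show "\<zero>\<^bsub>K\<^esub> \<in> f ` carrier M"
      by (metis M.M.zero_closed image_eqI)
  next
    fix v assume "v \<in> f ` carrier M"
    then obtain x where x: "x \<in> carrier M" and v: "v = f x" by blast
    have "\<ominus>\<^bsub>K\<^esub> v = f ((\<ominus>\<^bsub>R\<^esub> \<one>\<^bsub>R\<^esub>) \<odot>\<^bsub>M\<^esub> x)"
      using x v f_closed by (auto simp: f_smult K.smult_l_minus)
    then show "\<ominus>\<^bsub>K\<^esub> v \<in> f ` carrier M" using x by auto
  next
    fix v w assume "v \<in> f ` carrier M" and "w \<in> f ` carrier M"
    then show "v \<oplus>\<^bsub>K\<^esub> w \<in> f ` carrier M"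
      by (auto simp flip: f_add)
  next
    fix a v assume "a \<in> carrier R" and "v \<in> f ` carrier M"
    then show "a \<odot>\<^bsub>K\<^esub> v \<in> f ` carrier M"
      by (auto simp flip: f_smult)
  qed (use f_closed in blast)
qed

text \<open>Needed because \<open>refinement_ring\<close> only speaks about modules with carriers in
  \<open>nat \<Rightarrow> 'a\<close>.\<close>
lemma dsum_summand_iso_submodule:
  fixes M :: "('a, 'b) module" and N :: "('a, 'c) module" and K :: "('a, 'd) module"
  assumes M: "module R M" and N: "module R N" and K: "module R K"
    and iso: "mod_iso R (dsum M N) K"
  obtains Q :: "('a, 'd) module" where "module R Q" and "mod_iso R M Q"
proof -
  interpret N: module R N by fact
  obtain h where h: "bij_betw h (carrier (dsum M N)) (carrier K)"
    and h_add: "\<And>x y. x \<in> carrier (dsum M N) \<Longrightarrow> y \<in> carrier (dsum M N) \<Longrightarrow>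
      h (x \<oplus>\<^bsub>dsum M N\<^esub> y) = h x \<oplus>\<^bsub>K\<^esub> h y"
    and h_smult: "\<And>a x. a \<in> carrier R \<Longrightarrow> x \<in> carrier (dsum M N) \<Longrightarrow>
      h (a \<odot>\<^bsub>dsum M N\<^esub> x) = a \<odot>\<^bsub>K\<^esub> h x"
    using iso by (elim mod_isoE) blast
  define f where "f x = h (x, \<zero>\<^bsub>N\<^esub>)" for x
  have f_inj: "inj_on f (carrier M)"
    using h unfolding f_def bij_betw_def by (auto intro!: inj_onI dest: inj_onD)
  have f_closed: "f ` carrier M \<subseteq> carrier K"
    using h unfolding f_def by (auto intro: bij_betw_apply)
  have f_add: "f (x \<oplus>\<^bsub>M\<^esub> y) = f x \<oplus>\<^bsub>K\<^esub> f y" if "x \<in> carrier M" "y \<in> carrier M" for x y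
    using h_add[of "(x, \<zero>\<^bsub>N\<^esub>)" "(y, \<zero>\<^bsub>N\<^esub>)"] that unfolding f_def by simp
  have f_smult: "f (a \<odot>\<^bsub>M\<^esub> x) = a \<odot>\<^bsub>K\<^esub> f x" if "a \<in> carrier R" "x \<in> carrier M" for a x
    using h_smult[of a "(x, \<zero>\<^bsub>N\<^esub>)"] that unfolding f_def by simp
  define Q where "Q = K\<lparr>carrier := f ` carrier M\<rparr>"
  show thesis
  proof
    show "module R Q"
      unfolding Q_def using submodule_image[OF M K f_closed f_add f_smult] K
      by (rule submodule.submodule_is_module)
    show "mod_iso R M Q"
      unfolding Q_def using f_inj
      by (intro mod_isoI[of f]) (auto simp: inj_on_imp_bij_betw f_add f_smult)
  qed
qed

lemma dsum_iso_free_zero: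
  assumes iso: "mod_iso R (dsum M N) (free_mod R 0)" and M: "module R M" and N: "module R N"
  shows "mod_iso R M (free_mod R 0)"
proof -
  interpret M: module R M by fact
  interpret N: module R N by fact
  obtain h where h: "bij_betw h (carrier M \<times> carrier N) (carrier (free_mod R 0))"
    using iso by (elim mod_isoE) simp
  have free_zero: "carrier (free_mod R 0) = {\<lambda>i. \<zero>\<^bsub>R\<^esub>}"
    by auto
  have "carrier M = {\<zero>\<^bsub>M\<^esub>}"
  proof (intro equalityI subsetI)
    fix x assume "x \<in> carrier M"
    then have "h (x, \<zero>\<^bsub>N\<^esub>) = h (\<zero>\<^bsub>M\<^esub>, \<zero>\<^bsub>N\<^esub>)"
      using bij_betw_apply[OF h, of "(x, \<zero>\<^bsub>N\<^esub>)"] bij_betw_apply[OF h, of "(\<zero>\<^bsub>M\<^esub>, \<zero>\<^bsub>N\<^esub>)"]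
      by (simp add: free_zero)
    then show "x \<in> {\<zero>\<^bsub>M\<^esub>}"
      using h \<open>x \<in> carrier M\<close> by (auto simp: bij_betw_def dest: inj_onD)
  qed simp
  then show ?thesis
    by (intro mod_isoI[of "\<lambda>_ i. \<zero>\<^bsub>R\<^esub>"]) (auto simp: free_zero bij_betw_def inj_on_def)
qed

lemma iso_free_mod_one_generator:
  assumes X: "module R X"
    and \<phi>: "bij_betw \<phi> (carrier X) (carrier (free_mod R 1))"
    and \<phi>_smult: "\<And>a x. a \<in> carrier R \<Longrightarrow> x \<in> carrier X \<Longrightarrow> \<phi> (a \<odot>\<^bsub>X\<^esub> x) = a \<odot>\<^bsub>free_mod R 1\<^esub> \<phi> x"
  obtains g where "g \<in> carrier X" and "\<phi> g = (\<lambda>i. if i = 0 then \<one>\<^bsub>R\<^esub> else \<zero>\<^bsub>R\<^esub>)"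
    and "\<And>x. x \<in> carrier X \<Longrightarrow> x = \<phi> x 0 \<odot>\<^bsub>X\<^esub> g"
proof -
  interpret module R X by fact
  define e where "e = (\<lambda>i::nat. if i = 0 then \<one>\<^bsub>R\<^esub> else \<zero>\<^bsub>R\<^esub>)"
  have "e \<in> carrier (free_mod R 1)"
    by (simp add: e_def)
  then obtain g where g: "g \<in> carrier X" and \<phi>_g: "\<phi> g = e"
    using \<phi> by (metis bij_betw_iff_bijections)
  have "x = \<phi> x 0 \<odot>\<^bsub>X\<^esub> g" if x: "x \<in> carrier X" for x
  proof -
    have \<phi>_x: "\<phi> x \<in> carrier (free_mod R 1)"
      using \<phi> x by (rule bij_betw_apply)
    then have "\<phi> x = \<phi> x 0 \<odot>\<^bsub>free_mod R 1\<^esub> e"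
      by (auto simp: e_def fun_eq_iff)
    also have "\<dots> = \<phi> (\<phi> x 0 \<odot>\<^bsub>X\<^esub> g)"
      using \<phi>_x g by (simp add: \<phi>_smult \<phi>_g)
    finally show ?thesis
      using \<phi> x g \<phi>_x by (auto simp: bij_betw_def dest: inj_onD)
  qed
  with g \<phi>_g show thesis
    unfolding e_def by (rule that)
qed

definition annihilator_line :: "('a, 'e) ring_scheme \<Rightarrow> ('a, 'b) module \<Rightarrow> ('a, nat \<Rightarrow> 'a) module" where
  "annihilator_line R D = (free_mod R 1)\<lparr>carrier :=
     {v \<in> carrier (free_mod R 1). \<forall>d\<in>carrier D. v 0 \<odot>\<^bsub>D\<^esub> d = \<zero>\<^bsub>D\<^esub>}\<rparr>"

text \<open>With \<open>(b\<^sub>1, d\<^sub>1)\<close> the preimage of \<open>1\<close>, the coordinate of \<open>(b, 0)\<close> is the scalar \<open>s\<close> with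
  \<open>(b, 0) = s (b\<^sub>1, d\<^sub>1)\<close>; it annihilates \<open>d\<^sub>1\<close>, hence by commutativity all of \<open>D = R d\<^sub>1\<close>.\<close>
lemma dsum_iso_free_one_annihilator:
  assumes B: "module R B" and D: "module R D" and iso: "mod_iso R (dsum B D) (free_mod R 1)"
  shows "mod_iso R B (annihilator_line R D)"
proof -
  interpret B: module R B by fact
  interpret D: module R D by fact
  obtain \<phi> where \<phi>: "bij_betw \<phi> (carrier (dsum B D)) (carrier (free_mod R 1))"
    and \<phi>_add: "\<And>x y. x \<in> carrier (dsum B D) \<Longrightarrow> y \<in> carrier (dsum B D) \<Longrightarrow>
      \<phi> (x \<oplus>\<^bsub>dsum B D\<^esub> y) = \<phi> x \<oplus>\<^bsub>free_mod R 1\<^esub> \<phi> y"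
    and \<phi>_smult: "\<And>a x. a \<in> carrier R \<Longrightarrow> x \<in> carrier (dsum B D) \<Longrightarrow>
      \<phi> (a \<odot>\<^bsub>dsum B D\<^esub> x) = a \<odot>\<^bsub>free_mod R 1\<^esub> \<phi> x"
    using iso by (elim mod_isoE) blast
  obtain g where g: "g \<in> carrier (dsum B D)"
    and \<phi>_g: "\<phi> g = (\<lambda>i. if i = 0 then \<one>\<^bsub>R\<^esub> else \<zero>\<^bsub>R\<^esub>)"
    and generates: "\<And>x. x \<in> carrier (dsum B D) \<Longrightarrow> x = \<phi> x 0 \<odot>\<^bsub>dsum B D\<^esub> g"
    using iso_free_mod_one_generator[OF dsum_module[OF B D] \<phi> \<phi>_smult] by blast
  obtain b\<^sub>1 d\<^sub>1 where g_eq: "g = (b\<^sub>1, d\<^sub>1)" and b\<^sub>1: "b\<^sub>1 \<in> carrier B" and d\<^sub>1: "d\<^sub>1 \<in> carrier D"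
    using g by auto
  have coord: "\<phi> (b, d) 0 \<in> carrier R \<and> b = \<phi> (b, d) 0 \<odot>\<^bsub>B\<^esub> b\<^sub>1 \<and> d = \<phi> (b, d) 0 \<odot>\<^bsub>D\<^esub> d\<^sub>1"
    if "b \<in> carrier B" "d \<in> carrier D" for b d
    using generates[of "(b, d)"] bij_betw_apply[OF \<phi>, of "(b, d)"] that
    by (simp add: g_eq free_mod_carrier_closed[OF B.ring_axioms])
  have annihilates: "s \<odot>\<^bsub>D\<^esub> d = \<zero>\<^bsub>D\<^esub>"
    if s: "s \<in> carrier R" and s_d\<^sub>1: "s \<odot>\<^bsub>D\<^esub> d\<^sub>1 = \<zero>\<^bsub>D\<^esub>" and d: "d \<in> carrier D" for s d
  proof -
    define r where "r = \<phi> (\<zero>\<^bsub>B\<^esub>, d) 0"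
    have r: "r \<in> carrier R" and d_eq: "d = r \<odot>\<^bsub>D\<^esub> d\<^sub>1"
      using coord[OF B.zero_closed d] unfolding r_def by auto
    have "s \<odot>\<^bsub>D\<^esub> d = (r \<otimes>\<^bsub>R\<^esub> s) \<odot>\<^bsub>D\<^esub> d\<^sub>1"
      using s r d\<^sub>1 by (simp add: d_eq D.smult_assoc1[symmetric] B.m_comm)
    also have "\<dots> = \<zero>\<^bsub>D\<^esub>"
      using s r d\<^sub>1 by (simp add: D.smult_assoc1 s_d\<^sub>1)
    finally show ?thesis .
  qed
  have \<phi>_multiple: "\<phi> (s \<odot>\<^bsub>B\<^esub> b\<^sub>1, s \<odot>\<^bsub>D\<^esub> d\<^sub>1) = (\<lambda>i. if i = 0 then s else \<zero>\<^bsub>R\<^esub>)"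
    if "s \<in> carrier R" for s
    using \<phi>_smult[of s g] that g by (simp add: g_eq \<phi>_g[unfolded g_eq] fun_eq_iff)
  define f where "f b = \<phi> (b, \<zero>\<^bsub>D\<^esub>)" for b
  have "f ` carrier B = carrier (annihilator_line R D)"
  proof (intro equalityI subsetI)
    fix v assume "v \<in> f ` carrier B"
    then obtain b where b: "b \<in> carrier B" and v: "v = f b" by blast
    have "v \<in> carrier (free_mod R 1)"
      using bij_betw_apply[OF \<phi>, of "(b, \<zero>\<^bsub>D\<^esub>)"] b v by (simp add: f_def)
    moreover have "v 0 \<odot>\<^bsub>D\<^esub> d\<^sub>1 = \<zero>\<^bsub>D\<^esub>" and "v 0 \<in> carrier R"
      using coord[OF b D.zero_closed] v unfolding f_def by auto
    ultimately show "v \<in> carrier (annihilator_line R D)"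
      using annihilates by (simp add: annihilator_line_def)
  next
    fix v assume v: "v \<in> carrier (annihilator_line R D)"
    then have s: "v 0 \<in> carrier R" and s_d\<^sub>1: "v 0 \<odot>\<^bsub>D\<^esub> d\<^sub>1 = \<zero>\<^bsub>D\<^esub>"
      using d\<^sub>1 by (auto simp: annihilator_line_def)
    have "f (v 0 \<odot>\<^bsub>B\<^esub> b\<^sub>1) = v"
      using \<phi>_multiple[OF s] v by (auto simp: f_def s_d\<^sub>1 annihilator_line_def fun_eq_iff)
    then show "v \<in> f ` carrier B"
      using s b\<^sub>1 by (metis B.smult_closed image_eqI)
  qed
  moreover have "inj_on f (carrier B)"
    using \<phi> unfolding f_def bij_betw_def by (auto intro!: inj_onI dest: inj_onD)
  ultimately have "bij_betw f (carrier B) (carrier (annihilator_line R D))"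
    by (simp add: bij_betw_def)
  then show ?thesis
  proof (rule mod_isoI)
    fix x y assume "x \<in> carrier B" "y \<in> carrier B"
    then show "f (x \<oplus>\<^bsub>B\<^esub> y) = f x \<oplus>\<^bsub>annihilator_line R D\<^esub> f y"
      using \<phi>_add[of "(x, \<zero>\<^bsub>D\<^esub>)" "(y, \<zero>\<^bsub>D\<^esub>)"] by (simp add: f_def annihilator_line_def)
  next
    fix a x assume "a \<in> carrier R" "x \<in> carrier B"
    then show "f (a \<odot>\<^bsub>B\<^esub> x) = a \<odot>\<^bsub>annihilator_line R D\<^esub> f x"
      using \<phi>_smult[of a "(x, \<zero>\<^bsub>D\<^esub>)"] by (simp add: f_def annihilator_line_def)
  qed
qed

lemma dsum_free_one_cancel:
  assumes B: "module R B" and C: "module R C" and D: "module R D"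
    and "mod_iso R (dsum B D) (free_mod R 1)" and "mod_iso R (dsum C D) (free_mod R 1)"
  shows "mod_iso R B C"
  using dsum_iso_free_one_annihilator[OF B D] dsum_iso_free_one_annihilator[OF C D] assms
  by (metis mod_iso_sym mod_iso_trans)

lemma refinement_cancel_free_one:
  fixes Q :: "('a, nat \<Rightarrow> 'a) module"
  assumes R: "cring R" and refinement: "refinement_ring R" and Q: "module R Q"
    and iso: "mod_iso R (dsum Q (free_mod R 1)) (free_mod R (Suc k))"
  shows "mod_iso R Q (free_mod R k)"
proof -
  interpret cring R by fact
  have free_module: "module R (free_mod R n)" and free_fg_proj: "fg_proj R (free_mod R n)" for n
    using free_mod_module[OF R] free_mod_fg_proj[OF R] .
  have Q_fg_proj: "fg_proj R Q"
    unfolding fg_proj_def using Q iso free_module by blast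
  have split_iso: "mod_iso R (dsum Q (free_mod R 1)) (dsum (free_mod R k) (free_mod R 1))"
    using iso mod_iso_free_Suc[OF ring_axioms] by (rule mod_iso_trans)
  obtain Z\<^sub>1\<^sub>1 Z\<^sub>1\<^sub>2 Z\<^sub>2\<^sub>1 Z\<^sub>2\<^sub>2 :: "('a, nat \<Rightarrow> 'a) module"
    where Z: "fg_proj R Z\<^sub>1\<^sub>2" "fg_proj R Z\<^sub>2\<^sub>1" "fg_proj R Z\<^sub>2\<^sub>2"
      and Q_iso: "mod_iso R Q (dsum Z\<^sub>1\<^sub>1 Z\<^sub>1\<^sub>2)"
      and line_iso\<^sub>2: "mod_iso R (free_mod R 1) (dsum Z\<^sub>2\<^sub>1 Z\<^sub>2\<^sub>2)"
      and free_iso: "mod_iso R (free_mod R k) (dsum Z\<^sub>1\<^sub>1 Z\<^sub>2\<^sub>1)"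
      and line_iso\<^sub>1: "mod_iso R (free_mod R 1) (dsum Z\<^sub>1\<^sub>2 Z\<^sub>2\<^sub>2)"
    using refinement[unfolded refinement_ring_def, rule_format, OF conjI[OF Q_fg_proj
        conjI[OF free_fg_proj conjI[OF free_fg_proj conjI[OF free_fg_proj split_iso]]]]]
    by blast
  have "mod_iso R Z\<^sub>1\<^sub>2 Z\<^sub>2\<^sub>1"
    using Z line_iso\<^sub>1 line_iso\<^sub>2 unfolding fg_proj_def
    by (blast intro: dsum_free_one_cancel mod_iso_sym free_module)
  then have "mod_iso R Q (dsum Z\<^sub>1\<^sub>1 Z\<^sub>2\<^sub>1)"
    using Q_iso mod_iso_dsum[OF mod_iso_refl] mod_iso_trans by blast
  then show ?thesis
    using free_iso free_module mod_iso_sym mod_iso_trans by blast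
qed

lemma dsum_free_one_iso_free_imp_free:
  fixes M :: "('a, 'b) module"
  assumes R: "cring R" and refinement: "refinement_ring R" and M: "module R M"
    and iso: "mod_iso R (dsum M (free_mod R 1)) (free_mod R n)"
  shows "\<exists>k. mod_iso R M (free_mod R k)"
proof (cases n)
  case 0
  then show ?thesis
    using dsum_iso_free_zero[OF iso[unfolded 0] M free_mod_module[OF R]] by blast
next
  case (Suc k)
  obtain Q :: "('a, nat \<Rightarrow> 'a) module" where Q: "module R Q" and M_Q: "mod_iso R M Q"
    using dsum_summand_iso_submodule[OF M free_mod_module[OF R] free_mod_module[OF R] iso] .
  have "mod_iso R (dsum Q (free_mod R 1)) (dsum M (free_mod R 1))"
    using mod_iso_sym[OF M_Q M] mod_iso_refl by (rule mod_iso_dsum)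
  then have "mod_iso R (dsum Q (free_mod R 1)) (free_mod R (Suc k))"
    using iso Suc by (blast intro: mod_iso_trans)
  then have "mod_iso R Q (free_mod R k)"
    by (rule refinement_cancel_free_one[OF R refinement Q])
  with M_Q show ?thesis
    by (blast intro: mod_iso_trans)
qed

lemma dsum_free_iso_free_imp_free:
  fixes P :: "('a, 'b) module"
  assumes R: "cring R" and refinement: "refinement_ring R" and P: "module R P"
  shows "mod_iso R (dsum P (free_mod R m)) (free_mod R n) \<Longrightarrow> \<exists>k. mod_iso R P (free_mod R k)"
proof (induction m arbitrary: n)
  case 0
  have "mod_iso R P (dsum P (free_mod R 0))"
    using mod_iso_dsum_free_zero dsum_module[OF P free_mod_module[OF R]] by (rule mod_iso_sym)
  with 0 show ?case
    by (blast intro: mod_iso_trans)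
next
  case (Suc m)
  interpret cring R by fact
  have "mod_iso R (dsum P (dsum (free_mod R m) (free_mod R 1))) (dsum P (free_mod R (Suc m)))"
    using mod_iso_refl mod_iso_sym[OF mod_iso_free_Suc[OF ring_axioms] free_mod_module[OF R]]
    by (rule mod_iso_dsum)
  with Suc.prems have "mod_iso R (dsum (dsum P (free_mod R m)) (free_mod R 1)) (free_mod R n)"
    by (blast intro: mod_iso_trans mod_iso_dsum_assoc)
  then obtain k where "mod_iso R (dsum P (free_mod R m)) (free_mod R k)"
    using dsum_free_one_iso_free_imp_free[OF R refinement dsum_module[OF P free_mod_module[OF R]]]
    by blast
  then show ?case
    by (rule Suc.IH)
qed

theorem corollary2p4:
  fixes R :: "('a,'e) ring_scheme" and P :: "('a,'b) module"
  assumes "cring R" and "refinement_ring R" and "stably_free R P"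
  shows "free_module R P"
proof -
  obtain m n where P: "module R P" and "mod_iso R (dsum P (free_mod R m)) (free_mod R n)"
    using assms(3) unfolding stably_free_def by blast
  then show ?thesis
    unfolding free_module_def using dsum_free_iso_free_imp_free[OF assms(1,2) P] by blast
qed

end
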